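(* Let $\delta<\mathfrak t$ and let $\langle\bar\eta^\alpha:\alpha<\delta\rangle$ be a $\le^*$-increasing sequence of members of $\mathbf S$ (i.e. $\bar\eta^\alpha\le^*\bar\eta^\beta$ for $\alpha<\beta<\delta$). Then there is $\bar\eta\in\mathbf S$ with $\bar\eta^\alpha\le^*\bar\eta$ for all $\alpha<\delta$.
   Context: $\mathfrak t$ is the least length $\kappa$ of a sequence $\langle X_\alpha:\alpha<\kappa\rangle$ of infinite subsets of $\omega$ with $X_\beta\setminus X_\alpha$ finite for $\alpha<\beta$ and no infinite $X$ with $X\setminus X_\alpha$ finite for all $\alpha$. $\mathbf S$ is the family of all sequences $\bar\eta=\langle\eta_n:n\in B\rangle$ with $B\subseteq\omega$ infinite such that for each $n\in B$, $\eta_n$ is a function from the interval $[n,k)$ to $\{0,1\}$ for some $k\in(n,\omega)$; $\mathrm{dom}(\bar\eta)=B$. $\eta\trianglelefteq\nu$ means $\nu$ extends $\eta$. For $\bar\eta,\bar\nu\in\mathbf S$, $\bar\eta\le^*\bar\nu$ means that for all sufficiently large $n$, if $n\in\mathrm{dom}(\bar\nu)$ then $n\in\mathrm{dom}(\bar\eta)$ and $\eta_n\trianglelefteq\nu_n$. *)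

theory Defs
  imports Main "HOL-Library.Sublist"
begin

text \<open>The value eta_n is a nonempty
  list of booleans l, read as the function [n, n + length l) \<rightarrow> {0,1},
  i \<mapsto> l ! (i - n). The domain is {n. eta n \<noteq> None}.\<close>

definition inS :: "(nat \<Rightarrow> bool list option) \<Rightarrow> bool" where
  "inS eta \<longleftrightarrow> infinite {n. eta n \<noteq> None} \<and> (\<forall>n l. eta n = Some l \<longrightarrow> l \<noteq> [])"

text \<open>eta \<le>* nu: for all sufficiently large n, if n \<in> dom nu then n \<in> dom eta
  and eta_n is extended by nu_n (both start at n, so extension = list prefix).\<close>

definition le_star :: "(nat \<Rightarrow> bool list option) \<Rightarrow> (nat \<Rightarrow> bool list option) \<Rightarrow> bool" where
  "le_star eta nu \<longleftrightarrow>
     (\<exists>N. \<forall>n\<ge>N. \<forall>l'. nu n = Some l' \<longrightarrow> (\<exists>l. eta n = Some l \<and> prefix l l'))"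

definition is_tower :: "'b rel \<Rightarrow> ('b \<Rightarrow> nat set) \<Rightarrow> bool" where
  "is_tower r X \<longleftrightarrow>
     (\<forall>\<alpha>\<in>Field r. infinite (X \<alpha>)) \<and>
     (\<forall>\<alpha> \<beta>. (\<alpha>, \<beta>) \<in> r \<and> \<alpha> \<noteq> \<beta> \<longrightarrow> finite (X \<beta> - X \<alpha>)) \<and>
     \<not> (\<exists>Y. infinite Y \<and> (\<forall>\<alpha>\<in>Field r. finite (Y - X \<alpha>)))"

definition tower_length :: "'b rel \<Rightarrow> bool" where
  "tower_length r \<longleftrightarrow> Well_order r \<and> (\<exists>X. is_tower r X)"

text \<open>Lengths are represented by well-orders on nat set, which has size continuum \<ge> \<t>,
  so a tower of length exactly \<t> is representable there.\<close>

definition below_t :: "'a rel \<Rightarrow> bool" where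
  "below_t d \<longleftrightarrow> Well_order d \<and>
     (\<forall>s :: nat set rel. tower_length s \<longrightarrow> (d, s) \<in> ordLess)"

end

theory Submission
  imports Defs "HOL-Library.Countable" "HOL-Library.Infinite_Set"
begin

(* Below t, a sequence of infinite subsets of a countable set that decreases modulo finite sets
   has an infinite pseudo-intersection; repetitions do no harm, as the distinct sets alone form
   a tower that is no longer than the sequence. Applied to the domains of the eta^alpha this gives
   an infinite B almost contained in all of them. A transfinite recursion along d, taking such a
   pseudo-intersection at every stage, thins B to an infinite A on which one function h bounds
   all lengths |eta^alpha_n| eventually: A is thinned so that |eta^alpha_a| never exceeds the
   next element of A after a. Finally the sets of pairs (n, s) with |s| = h n + 1 and s extending
   eta^alpha_n again decrease modulo finite sets, and now have finite sections; picking one s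
   for each n in the projection of an infinite pseudo-intersection gives the upper bound. *)

lemma strict_mono_self_map_inflationary:
  assumes wo: "Well_order r" and mono: "compat r r f" and inj: "inj_on f (Field r)"
    and into: "f ` Field r \<subseteq> Field r" and a: "a \<in> Field r"
  shows "(a, f a) \<in> r"
proof -
  have wf: "wf (r - Id)" using wo by (simp add: well_order_on_def)
  show ?thesis using a
  proof (induction a rule: wf_induct_rule[OF wf])
    case (1 a)
    note IH = 1(1) and a = 1(2)
    show ?case
    proof (rule ccontr)
      assume not_le: "(a, f a) \<notin> r"
      have lin: "Linear_order r" using wo by (simp add: well_order_on_def)
      have fa: "f a \<in> Field r" using into a by blast
      have below: "(f a, a) \<in> r - Id"
        using Linear_order_in_diff_Id[OF lin a fa] not_le by blast
      have "(f a, f (f a)) \<in> r" using IH[OF below fa] .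
      moreover have "(f (f a), f a) \<in> r" using mono below unfolding compat_def by blast
      moreover have "f (f a) \<noteq> f a" using inj below fa a unfolding inj_on_def by blast
      ultimately show False
        using lin unfolding linear_order_on_def partial_order_on_def antisym_def by blast
    qed
  qed
qed

lemma Restr_ordLeq:
  assumes wo: "Well_order r"
  shows "(Restr r A, r) \<in> ordLeq"
proof (rule ccontr)
  let ?s = "Restr r A"
  have wo_s: "Well_order ?s" using wo Well_order_Restr by blast
  assume "(?s, r) \<notin> ordLeq"
  then have "(r, ?s) \<in> ordLess" using wo wo_s not_ordLeq_iff_ordLess by blast
  then obtain f where f: "embedS r ?s f" unfolding ordLess_def by blast
  then have emb: "embed r ?s f" unfolding embedS_def by blast
  have inj: "inj_on f (Field r)" using embed_inj_on[OF wo emb] .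
  have into: "f ` Field r \<subseteq> Field ?s" using embed_Field[OF emb] .
  have ofilter: "wo_rel.ofilter ?s (f ` Field r)" using embed_Field_ofilter[OF wo wo_s emb] .
  have mono: "compat r r f" using embed_compat[OF emb] unfolding compat_def by blast
  have "f ` Field r \<noteq> Field ?s" using f inj unfolding embedS_def bij_betw_def by blast
  then obtain b where b: "b \<in> Field ?s" "b \<notin> f ` Field r" using into by blast
  have sub: "Field ?s \<subseteq> Field r" "Field ?s \<subseteq> A" by (auto simp: Field_def)
  have "(b, f b) \<in> r"
    using strict_mono_self_map_inflationary[OF wo mono inj] into sub b(1) by blast
  moreover have "f b \<in> A" using into sub b(1) by blast
  ultimately have "(b, f b) \<in> ?s" using sub b(1) by blast
  then have "b \<in> f ` Field r"
    using ofilter sub b(1) into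
    unfolding wo_rel.ofilter_def[OF wo_rel.intro[OF wo_s]] under_def by blast
  then show False using b(2) by blast
qed

lemma below_t_Restr: "below_t d \<Longrightarrow> below_t (Restr d A)"
  unfolding below_t_def using Restr_ordLeq Well_order_Restr ordLeq_ordLess_trans by blast

definition almost_decreasing :: "'b rel \<Rightarrow> ('b \<Rightarrow> 'c set) \<Rightarrow> bool" where
  "almost_decreasing r X \<longleftrightarrow> (\<forall>\<alpha> \<beta>. (\<alpha>, \<beta>) \<in> r \<and> \<alpha> \<noteq> \<beta> \<longrightarrow> finite (X \<beta> - X \<alpha>))"

lemma below_t_pseudo_intersection_nat:
  fixes X :: "'b \<Rightarrow> nat set"
  assumes below: "below_t r" and inf: "\<forall>\<alpha>\<in>Field r. infinite (X \<alpha>)"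
    and dec: "almost_decreasing r X"
  shows "\<exists>Y. infinite Y \<and> (\<forall>\<alpha>\<in>Field r. finite (Y - X \<alpha>))"
proof (rule ccontr)
  assume no_pi: "\<nexists>Y. infinite Y \<and> (\<forall>\<alpha>\<in>Field r. finite (Y - X \<alpha>))"
  have wo: "Well_order r" using below unfolding below_t_def by blast
  \<comment> \<open>One index per distinct set; ordered like their indices, the sets form a tower.\<close>
  define S where "S = inv_into (Field r) X ` X ` Field r"
  have S: "S \<subseteq> Field r" "X ` S = X ` Field r" "inj_on X S"
    unfolding S_def by (auto simp: inv_into_into f_inv_into_f inj_on_def image_image)
  have wo_S: "Well_order (Restr r S)" using wo Well_order_Restr by blast
  have field_S: "Field (Restr r S) = S"
    using Refl_Field_Restr2[OF _ S(1)] wo by (simp add: order_on_defs)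
  define s where "s = dir_image (Restr r S) X"
  have wo_s: "Well_order s" unfolding s_def using Well_order_dir_image[OF wo_S] S(3) field_S by simp
  have "(Restr r S, s) \<in> ordIso" unfolding s_def using dir_image_ordIso[OF wo_S] S(3) field_S by simp
  then have "(s, r) \<in> ordLeq"
    using ordIso_ordLeq_trans[OF ordIso_symmetric Restr_ordLeq[OF wo]] by blast
  have field_s: "Field s = X ` Field r" unfolding s_def dir_image_Field field_S S(2) ..
  have "is_tower s id"
    unfolding is_tower_def
  proof (intro conjI allI impI)
    show "\<forall>A\<in>Field s. infinite (id A)" using field_s inf by auto
  next
    fix A B assume "(A, B) \<in> s \<and> A \<noteq> B"
    then obtain \<alpha> \<beta> where "A = X \<alpha>" "B = X \<beta>" "(\<alpha>, \<beta>) \<in> r" "\<alpha> \<noteq> \<beta>"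
      unfolding s_def dir_image_def by blast
    then show "finite (id B - id A)" using dec unfolding almost_decreasing_def by auto
  next
    show "\<nexists>Y. infinite Y \<and> (\<forall>A\<in>Field s. finite (Y - id A))"
      using no_pi field_s by auto
  qed
  then have "(r, s) \<in> ordLess"
    using below wo_s unfolding below_t_def tower_length_def by blast
  then show False using \<open>(s, r) \<in> ordLeq\<close> not_ordLess_ordLeq by blast
qed

lemma below_t_pseudo_intersection:
  fixes X :: "'b \<Rightarrow> 'c::countable set"
  assumes below: "below_t r" and "infinite C"
    and sub: "\<forall>\<alpha>\<in>Field r. X \<alpha> \<subseteq> C \<and> infinite (X \<alpha>)"
    and dec: "almost_decreasing r X"
  shows "\<exists>Y\<subseteq>C. infinite Y \<and> (\<forall>\<alpha>\<in>Field r. finite (Y - X \<alpha>))"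
proof (cases "Field r = {}")
  case True
  then show ?thesis using \<open>infinite C\<close> by blast
next
  case False
  then obtain \<alpha>0 where \<alpha>0: "\<alpha>0 \<in> Field r" by blast
  have inf: "\<forall>\<alpha>\<in>Field r. infinite (to_nat ` X \<alpha>)"
    using sub by (simp add: finite_image_iff)
  have dec': "almost_decreasing r (\<lambda>\<alpha>. to_nat ` X \<alpha>)"
    using dec unfolding almost_decreasing_def by (simp add: image_set_diff[OF inj_to_nat, symmetric])
  obtain Z where Z: "infinite Z" "\<forall>\<alpha>\<in>Field r. finite (Z - to_nat ` X \<alpha>)"
    using below_t_pseudo_intersection_nat[OF below inf dec'] by blast
  define Y where "Y = X \<alpha>0 \<inter> to_nat -` Z"
  have "Z \<subseteq> to_nat ` Y \<union> (Z - to_nat ` X \<alpha>0)" unfolding Y_def by auto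
  then have "infinite Y" using Z \<alpha>0 by (meson finite_UnI finite_imageI finite_subset)
  moreover have "finite (Y - X \<alpha>)" if "\<alpha> \<in> Field r" for \<alpha>
  proof -
    have "to_nat ` (Y - X \<alpha>) \<subseteq> Z - to_nat ` X \<alpha>" unfolding Y_def by auto
    then show ?thesis
      using Z(2) that by (meson finite_imageD finite_subset inj_on_subset inj_to_nat subset_UNIV)
  qed
  moreover have "Y \<subseteq> C" unfolding Y_def using sub \<alpha>0 by blast
  ultimately show ?thesis by blast
qed

lemma below_t_pseudo_intersection_underS:
  fixes X :: "'a \<Rightarrow> 'c::countable set"
  assumes below: "below_t d" and "infinite C"
    and sub: "\<forall>\<beta>\<in>underS d \<alpha>. X \<beta> \<subseteq> C \<and> infinite (X \<beta>)"
    and dec: "almost_decreasing (Restr d (underS d \<alpha>)) X"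
  shows "\<exists>Y\<subseteq>C. infinite Y \<and> (\<forall>\<beta>\<in>underS d \<alpha>. finite (Y - X \<beta>))"
proof -
  have wo: "Well_order d" using below unfolding below_t_def by blast
  then have field: "Field (Restr d (underS d \<alpha>)) = underS d \<alpha>"
    using Field_Restr_ofilter[OF wo wo_rel.underS_ofilter] by (simp add: wo_rel_def)
  show ?thesis
    using below_t_pseudo_intersection[OF below_t_Restr[OF below] \<open>infinite C\<close> _ dec] sub
    unfolding field by blast
qed

definition eventually_spaced :: "(nat \<Rightarrow> nat) \<Rightarrow> nat set \<Rightarrow> bool" where
  "eventually_spaced g A \<longleftrightarrow> (\<exists>N. \<forall>a\<in>A. \<forall>b\<in>A. N \<le> a \<longrightarrow> a < b \<longrightarrow> g a \<le> b)"

lemma infinite_has_eventually_spaced_subset: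
  assumes "infinite (Y :: nat set)"
  shows "\<exists>Y'\<subseteq>Y. infinite Y' \<and> eventually_spaced g Y'"
proof -
  have "\<exists>y. y \<in> Y" using assms by (meson finite.emptyI finite_subset subsetI)
  moreover have "\<exists>y. y \<in> Y \<and> x + g x < y" for x
    using assms unfolding infinite_nat_iff_unbounded by blast
  ultimately obtain t where t: "\<forall>n. t n \<in> Y \<and> t n + g (t n) < t (Suc n)"
    using dependent_nat_choice[of "\<lambda>_ y. y \<in> Y" "\<lambda>_ x y. x + g x < y"] by blast
  then have mono: "strict_mono t" unfolding strict_mono_Suc_iff by (metis add_lessD1)
  have "eventually_spaced g (range t)"
    unfolding eventually_spaced_def
  proof (intro exI[of _ 0] ballI impI)
    fix a b assume "a \<in> range t" "b \<in> range t" "a < b"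
    then obtain i j where ij: "a = t i" "b = t j" "i < j"
      using strict_mono_less[OF mono] by blast
    then have "t (Suc i) \<le> t j" using strict_mono_less_eq[OF mono] by simp
    moreover have "t i + g (t i) < t (Suc i)" using t by blast
    ultimately show "g a \<le> b" unfolding ij(1,2) by linarith
  qed
  moreover have "infinite (range t)" using range_inj_infinite strict_mono_imp_inj_on mono by blast
  ultimately show ?thesis using t by blast
qed

lemma eventually_spaced_almost_subset:
  assumes "eventually_spaced g A" "finite (A' - A)"
  shows "eventually_spaced g A'"
proof -
  obtain N where N: "\<forall>a\<in>A. \<forall>b\<in>A. N \<le> a \<longrightarrow> a < b \<longrightarrow> g a \<le> b"
    using assms(1) unfolding eventually_spaced_def by blast
  obtain M where M: "\<forall>x\<in>A' - A. x < M"
    using assms(2) finite_nat_set_iff_bounded by blast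
  have "g a \<le> b" if "a \<in> A'" "b \<in> A'" "max N M \<le> a" "a < b" for a b
    using N M that by (metis Diff_iff max.bounded_iff not_less order_less_trans)
  then show ?thesis unfolding eventually_spaced_def by blast
qed

lemma below_t_common_refinement:
  fixes d :: "'a rel" and P :: "'a \<Rightarrow> nat set \<Rightarrow> bool"
  assumes below: "below_t d" and B: "infinite B"
    and dense: "\<And>\<alpha> Y. infinite Y \<Longrightarrow> \<exists>Y'\<subseteq>Y. infinite Y' \<and> P \<alpha> Y'"
    and almost_closed: "\<And>\<alpha> Y Y'. P \<alpha> Y \<Longrightarrow> finite (Y' - Y) \<Longrightarrow> P \<alpha> Y'"
  shows "\<exists>A\<subseteq>B. infinite A \<and> (\<forall>\<alpha>\<in>Field d. P \<alpha> A)"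
proof -
  have wo: "Well_order d" using below unfolding below_t_def by blast
  define R where "R = d - Id"
  have wf: "wf R" using wo unfolding R_def by (simp add: well_order_on_def)
  have R_underS: "(\<beta>, \<alpha>) \<in> R \<longleftrightarrow> \<beta> \<in> underS d \<alpha>" for \<alpha> \<beta>
    unfolding R_def underS_def by blast
  \<comment> \<open>The choice is possible because every initial segment of d is again below t.\<close>
  define step where "step f \<alpha> = (SOME Y. Y \<subseteq> B \<and> infinite Y \<and> P \<alpha> Y \<and>
      (\<forall>\<beta>\<in>underS d \<alpha>. finite (Y - f \<beta>)))" for f and \<alpha> :: 'a
  define A where "A = wfrec R step"
  have A_step: "A \<alpha> = step A \<alpha>" for \<alpha>
    unfolding A_def by (subst wfrec_fixpoint[OF wf]) (auto simp: adm_wf_def step_def R_underS)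
  have A: "A \<alpha> \<subseteq> B \<and> infinite (A \<alpha>) \<and> P \<alpha> (A \<alpha>) \<and> (\<forall>\<beta>\<in>underS d \<alpha>. finite (A \<alpha> - A \<beta>))" for \<alpha>
  proof (induction \<alpha> rule: wf_induct_rule[OF wf])
    case (1 \<alpha>)
    have IH: "\<forall>\<beta>\<in>underS d \<alpha>. A \<beta> \<subseteq> B \<and> infinite (A \<beta>) \<and> (\<forall>\<gamma>\<in>underS d \<beta>. finite (A \<beta> - A \<gamma>))"
      using 1 R_underS by blast
    have sub: "\<forall>\<beta>\<in>underS d \<alpha>. A \<beta> \<subseteq> B \<and> infinite (A \<beta>)"
      using IH by blast
    have dec: "almost_decreasing (Restr d (underS d \<alpha>)) A"
      using IH unfolding almost_decreasing_def underS_def by blast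
    obtain Y where Y: "Y \<subseteq> B" "infinite Y" "\<forall>\<beta>\<in>underS d \<alpha>. finite (Y - A \<beta>)"
      using below_t_pseudo_intersection_underS[OF below B sub dec] by blast
    obtain Y' where "Y' \<subseteq> Y" "infinite Y'" "P \<alpha> Y'" using dense[OF Y(2)] by blast
    then have "\<exists>Y. Y \<subseteq> B \<and> infinite Y \<and> P \<alpha> Y \<and> (\<forall>\<beta>\<in>underS d \<alpha>. finite (Y - A \<beta>))"
      using Y by (meson Diff_mono finite_subset order_refl order_trans)
    then show ?case unfolding A_step[of \<alpha>] step_def by (rule someI_ex)
  qed
  have dec: "almost_decreasing d A"
    using A unfolding almost_decreasing_def underS_def by blast
  have sub: "\<forall>\<alpha>\<in>Field d. A \<alpha> \<subseteq> B \<and> infinite (A \<alpha>)"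
    using A by blast
  obtain Y where Y: "Y \<subseteq> B" "infinite Y" "\<forall>\<alpha>\<in>Field d. finite (Y - A \<alpha>)"
    using below_t_pseudo_intersection[OF below B sub dec] by blast
  have "P \<alpha> Y" if "\<alpha> \<in> Field d" for \<alpha>
    using almost_closed[of \<alpha> "A \<alpha>" Y] A Y(3) that by blast
  then show ?thesis using Y(1,2) by blast
qed

lemma below_t_eventually_bounded:
  fixes d :: "'a rel" and g :: "'a \<Rightarrow> nat \<Rightarrow> nat"
  assumes below: "below_t d" and "infinite B"
  shows "\<exists>A\<subseteq>B. infinite A \<and> (\<exists>h. \<forall>\<alpha>\<in>Field d. finite {n\<in>A. h n < g \<alpha> n})"
proof -
  have "\<exists>A\<subseteq>B. infinite A \<and> (\<forall>\<alpha>\<in>Field d. eventually_spaced (g \<alpha>) A)"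
    using infinite_has_eventually_spaced_subset eventually_spaced_almost_subset
    by (rule below_t_common_refinement[OF below \<open>infinite B\<close>])
  then obtain A where A: "A \<subseteq> B" "infinite A" "\<forall>\<alpha>\<in>Field d. eventually_spaced (g \<alpha>) A"
    by blast
  \<comment> \<open>Eventual spacing of A makes h dominate every g \<alpha> on A.\<close>
  define h where "h n = (LEAST b. b \<in> A \<and> n < b)" for n
  have h: "h n \<in> A \<and> n < h n" for n
    unfolding h_def by (rule LeastI_ex) (use A(2) infinite_nat_iff_unbounded in blast)
  have "finite {n\<in>A. h n < g \<alpha> n}" if \<alpha>: "\<alpha> \<in> Field d" for \<alpha>
  proof -
    obtain N where N: "\<forall>a\<in>A. \<forall>b\<in>A. N \<le> a \<longrightarrow> a < b \<longrightarrow> g \<alpha> a \<le> b"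
      using A(3) \<alpha> unfolding eventually_spaced_def by blast
    have bound: "g \<alpha> n \<le> h n" if "n \<in> A" "N \<le> n" for n
      using N h that by blast
    have "n < N" if "n \<in> A" "h n < g \<alpha> n" for n
      using bound[OF that(1)] that(2) by (meson leD not_le)
    then have "{n\<in>A. h n < g \<alpha> n} \<subseteq> {..<N}" by blast
    then show ?thesis using finite_subset by blast
  qed
  then show ?thesis using A by blast
qed

lemma le_star_dom:
  assumes "le_star eta nu"
  shows "finite (dom nu - dom eta)"
proof -
  obtain N where N: "\<forall>n\<ge>N. \<forall>l'. nu n = Some l' \<longrightarrow> (\<exists>l. eta n = Some l \<and> prefix l l')"
    using assms unfolding le_star_def by blast
  then have "dom nu - dom eta \<subseteq> {..<N}" by (fastforce simp: not_le[symmetric])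
  then show ?thesis by (rule finite_subset) simp
qed

lemma below_t_chain_lengths_bounded:
  fixes d :: "'a rel" and eta :: "'a \<Rightarrow> nat \<Rightarrow> bool list option"
  assumes below: "below_t d"
    and S: "\<forall>\<alpha>\<in>Field d. inS (eta \<alpha>)"
    and chain: "\<forall>\<alpha> \<beta>. (\<alpha>, \<beta>) \<in> d \<and> \<alpha> \<noteq> \<beta> \<longrightarrow> le_star (eta \<alpha>) (eta \<beta>)"
  shows "\<exists>A h. infinite A \<and>
    (\<forall>\<alpha>\<in>Field d. finite {n\<in>A. \<nexists>l. eta \<alpha> n = Some l \<and> length l \<le> h n})"
proof -
  have dom_inf: "\<forall>\<alpha>\<in>Field d. dom (eta \<alpha>) \<subseteq> UNIV \<and> infinite (dom (eta \<alpha>))"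
    using S by (simp add: inS_def dom_def)
  have dom_dec: "almost_decreasing d (\<lambda>\<alpha>. dom (eta \<alpha>))"
    using chain le_star_dom unfolding almost_decreasing_def by blast
  obtain B where B: "infinite B" "\<forall>\<alpha>\<in>Field d. finite (B - dom (eta \<alpha>))"
    using below_t_pseudo_intersection[OF below infinite_UNIV_nat dom_inf dom_dec] by blast
  define len where "len \<alpha> n = (case eta \<alpha> n of None \<Rightarrow> 0 | Some l \<Rightarrow> length l)" for \<alpha> n
  obtain A h where A: "A \<subseteq> B" "infinite A" "\<forall>\<alpha>\<in>Field d. finite {n\<in>A. h n < len \<alpha> n}"
    using below_t_eventually_bounded[OF below B(1)] by blast
  have "{n\<in>A. \<nexists>l. eta \<alpha> n = Some l \<and> length l \<le> h n} \<subseteq> (B - dom (eta \<alpha>)) \<union> {n\<in>A. h n < len \<alpha> n}"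
    for \<alpha>
    using A(1) by (auto simp: len_def not_le)
  then show ?thesis using A B by (meson finite_UnI finite_subset)
qed

definition extensions :: "(nat \<Rightarrow> nat) \<Rightarrow> (nat \<Rightarrow> bool list option) \<Rightarrow> (nat \<times> bool list) set" where
  "extensions k eta = {(n, \<sigma>). length \<sigma> = k n \<and> (\<exists>l. eta n = Some l \<and> prefix l \<sigma>)}"

lemma finite_bool_lists_length: "finite {\<sigma> :: bool list. length \<sigma> = m}"
  using finite_lists_length_eq[of "UNIV :: bool set" m] by simp

lemma infinite_lists_length_graph:
  fixes k :: "nat \<Rightarrow> nat"
  shows "infinite {(n, \<sigma> :: bool list). length \<sigma> = k n}"
proof -
  have "range (\<lambda>n. (n, replicate (k n) False)) \<subseteq> {(n, \<sigma>). length \<sigma> = k n}" by auto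
  moreover have "infinite (range (\<lambda>n. (n, replicate (k n) False)))"
    by (rule range_inj_infinite) (simp add: inj_def)
  ultimately show ?thesis by (rule infinite_super)
qed

lemma finite_lists_below:
  fixes N :: nat
  shows "finite {(n, \<sigma> :: bool list). n < N \<and> length \<sigma> = k n}"
proof -
  have "{(n, \<sigma> :: bool list). n < N \<and> length \<sigma> = k n} = Sigma {..<N} (\<lambda>n. {\<sigma>. length \<sigma> = k n})"
    by auto
  moreover have "finite (Sigma {..<N} (\<lambda>n. {\<sigma> :: bool list. length \<sigma> = k n}))"
    by (rule finite_SigmaI) (simp_all add: finite_bool_lists_length)
  ultimately show ?thesis by simp
qed

lemma le_star_extensions:
  assumes "le_star eta nu"
  shows "finite (extensions k nu - extensions k eta)"
proof -
  obtain N where N: "\<forall>n\<ge>N. \<forall>l'. nu n = Some l' \<longrightarrow> (\<exists>l. eta n = Some l \<and> prefix l l')"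
    using assms unfolding le_star_def by blast
  have "extensions k nu - extensions k eta \<subseteq> {(n, \<sigma>). n < N \<and> length \<sigma> = k n}"
    using N by (fastforce simp: extensions_def not_le[symmetric] intro: prefix_order.trans)
  then show ?thesis using finite_lists_below finite_subset by blast
qed

lemma infinite_extensions:
  assumes "infinite A" and "finite {n\<in>A. \<nexists>l. eta n = Some l \<and> length l \<le> k n}"
  shows "infinite (extensions k eta)"
proof -
  have "(n, l @ replicate (k n - length l) False) \<in> extensions k eta"
    if "eta n = Some l" "length l \<le> k n" for n l
    using that by (simp add: extensions_def)
  then have "A - {n\<in>A. \<nexists>l. eta n = Some l \<and> length l \<le> k n} \<subseteq> fst ` extensions k eta"
    by force
  moreover have "infinite (A - {n\<in>A. \<nexists>l. eta n = Some l \<and> length l \<le> k n})"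
    using assms by (rule Diff_infinite_finite[rotated])
  ultimately show ?thesis using finite_imageI finite_subset by blast
qed

definition choice_map :: "('a \<times> 'b) set \<Rightarrow> 'a \<Rightarrow> 'b option" where
  "choice_map Z x = (if \<exists>y. (x, y) \<in> Z then Some (SOME y. (x, y) \<in> Z) else None)"

lemma dom_choice_map: "dom (choice_map Z) = fst ` Z"
  unfolding choice_map_def dom_def by (auto simp: fst_eq_Domain Domain_iff)

lemma choice_map_SomeD: "choice_map Z x = Some y \<Longrightarrow> (x, y) \<in> Z"
  by (auto simp: choice_map_def split: if_splits intro: someI)

lemma inS_choice_map:
  assumes "infinite Z" and Z: "Z \<subseteq> {(n, \<sigma>). length \<sigma> = Suc (h n)}"
  shows "inS (choice_map Z)"
proof -
  have "Z \<subseteq> Sigma (fst ` Z) (\<lambda>n. {\<sigma>. length \<sigma> = Suc (h n)})" using Z by force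
  moreover have "finite (Sigma (fst ` Z) (\<lambda>n. {\<sigma> :: bool list. length \<sigma> = Suc (h n)}))"
    if "finite (fst ` Z)"
    using that by (rule finite_SigmaI) (simp add: finite_bool_lists_length)
  ultimately have "infinite (fst ` Z)" using \<open>infinite Z\<close> finite_subset by blast
  moreover have "l \<noteq> []" if "choice_map Z n = Some l" for n l
    using choice_map_SomeD[OF that] Z by auto
  ultimately show ?thesis unfolding inS_def dom_choice_map[symmetric] dom_def by blast
qed

lemma le_star_choice_map:
  assumes "finite (Z - extensions k eta)"
  shows "le_star eta (choice_map Z)"
proof -
  obtain M where M: "\<forall>n\<in>fst ` (Z - extensions k eta). n < M"
    using assms finite_nat_set_iff_bounded by blast
  have "\<exists>l. eta n = Some l \<and> prefix l \<sigma>" if "M \<le> n" "choice_map Z n = Some \<sigma>" for n \<sigma>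
  proof -
    have "(n, \<sigma>) \<in> Z" using choice_map_SomeD[OF that(2)] .
    then have "(n, \<sigma>) \<in> extensions k eta" using M that(1) by force
    then show ?thesis unfolding extensions_def by blast
  qed
  then show ?thesis unfolding le_star_def by blast
qed

theorem lemma2p7:
  fixes d :: "'a rel" and eta :: "'a \<Rightarrow> nat \<Rightarrow> bool list option"
  assumes "below_t d"
    and "\<forall>\<alpha>\<in>Field d. inS (eta \<alpha>)"
    and "\<forall>\<alpha> \<beta>. (\<alpha>, \<beta>) \<in> d \<and> \<alpha> \<noteq> \<beta> \<longrightarrow> le_star (eta \<alpha>) (eta \<beta>)"
  shows "\<exists>nu. inS nu \<and> (\<forall>\<alpha>\<in>Field d. le_star (eta \<alpha>) nu)"
proof -
  obtain A h where "infinite A"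
    and bounded: "\<forall>\<alpha>\<in>Field d. finite {n\<in>A. \<nexists>l. eta \<alpha> n = Some l \<and> length l \<le> h n}"
    using below_t_chain_lengths_bounded[OF assms] by blast
  \<comment> \<open>The Suc keeps the chosen strings nonempty.\<close>
  define k where "k n = Suc (h n)" for n
  define T where "T = {(n, \<sigma> :: bool list). length \<sigma> = k n}"
  have "infinite T" unfolding T_def by (rule infinite_lists_length_graph)
  have "finite {n\<in>A. \<nexists>l. eta \<alpha> n = Some l \<and> length l \<le> k n}" if "\<alpha> \<in> Field d" for \<alpha>
    using bounded that by (auto simp: k_def intro: finite_subset[rotated] le_SucI)
  then have ext: "\<forall>\<alpha>\<in>Field d. extensions k (eta \<alpha>) \<subseteq> T \<and> infinite (extensions k (eta \<alpha>))"
    using infinite_extensions[OF \<open>infinite A\<close>] by (auto simp: extensions_def T_def)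
  have "almost_decreasing d (\<lambda>\<alpha>. extensions k (eta \<alpha>))"
    using assms(3) le_star_extensions unfolding almost_decreasing_def by blast
  then obtain Z where Z: "Z \<subseteq> T" "infinite Z" "\<forall>\<alpha>\<in>Field d. finite (Z - extensions k (eta \<alpha>))"
    using below_t_pseudo_intersection[OF assms(1) \<open>infinite T\<close> ext] by blast
  have "inS (choice_map Z)"
    using inS_choice_map[OF Z(2)] Z(1) unfolding T_def k_def by blast
  moreover have "\<forall>\<alpha>\<in>Field d. le_star (eta \<alpha>) (choice_map Z)"
    using le_star_choice_map Z(3) by blast
  ultimately show ?thesis by blast
qed

end
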